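(* Let $m,n\geq 3$ and let $v$ be a vertex of the torus grid $T_{m,n}=C_m\square C_n$. Then $\mathrm{ef}(v)<9$.
   Context: For a vertex $v$ of a graph, $N_i(v)$ denotes the set of vertices at distance exactly $i$ from $v$, and $\mathrm{ef}(v)=\sum_{i\geq 0}(1/2)^i|N_i(v)|$. $C_m\square C_n$ is the Cartesian product of cycles on $m$ and $n$ vertices. *)

theory Defs
  imports Complex_Main
begin

definition cycle_adj :: "nat \<Rightarrow> nat \<Rightarrow> nat \<Rightarrow> bool" where
  "cycle_adj m a c \<longleftrightarrow> a < m \<and> c < m \<and> (c = (a + 1) mod m \<or> a = (c + 1) mod m)"

definition torus_verts :: "nat \<Rightarrow> nat \<Rightarrow> (nat \<times> nat) set" where
  "torus_verts m n = {0..<m} \<times> {0..<n}"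

definition torus_edges :: "nat \<Rightarrow> nat \<Rightarrow> ((nat \<times> nat) \<times> (nat \<times> nat)) set" where
  "torus_edges m n = {((a,b),(c,d)). (a,b) \<in> torus_verts m n \<and> (c,d) \<in> torus_verts m n \<and>
      ((a = c \<and> cycle_adj n b d) \<or> (b = d \<and> cycle_adj m a c))}"

definition dist_sphere :: "'a set \<Rightarrow> ('a \<times> 'a) set \<Rightarrow> 'a \<Rightarrow> nat \<Rightarrow> 'a set" where
  "dist_sphere V E v i = {u \<in> V. (v, u) \<in> E ^^ i \<and> (\<forall>j<i. (v, u) \<notin> E ^^ j)}"

definition ef :: "'a set \<Rightarrow> ('a \<times> 'a) set \<Rightarrow> 'a \<Rightarrow> real" where
  "ef V E v = (\<Sum>i. (1/2) ^ i * real (card (dist_sphere V E v i)))"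

end

theory Submission
  imports Defs
begin

(* Lift the torus to its universal cover: write torus_vertex m n x y for the image of the
   lattice point (x, y) of Z^2.  A walk of length k from the image of (a, b) ends at the image
   of a point within l1-distance k of (a, b), and conversely every such image is reached by a
   walk of length |x| + |y|.  Hence N_i(v) is covered by the image of the l1-sphere of radius i,
   so |N_i(v)| <= 4 i for i >= 1, and N_i(v) is empty for i >= m + n.  Therefore
   ef(v) <= 1 + 4 * sum_{i < m + n} i / 2^i < 1 + 4 * 2 = 9. *)

lemma card_dist_sphere_0_le: "card (dist_sphere V E v 0) \<le> 1"
proof -
  have "dist_sphere V E v 0 \<subseteq> {v}"
    unfolding dist_sphere_def by auto
  then show ?thesis
    using card_mono[of "{v}"] by fastforce
qed

lemma dist_sphere_le_walk_length:
  assumes "u \<in> dist_sphere V E v i" and "(v, u) \<in> E ^^ j"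
  shows "i \<le> j"
  using assms leI unfolding dist_sphere_def by blast

lemma dist_sphere_eq_empty:
  assumes "\<forall>u\<in>V. \<exists>j<K. (v, u) \<in> E ^^ j" and "K \<le> i"
  shows "dist_sphere V E v i = {}"
  using assms unfolding dist_sphere_def by fastforce

lemma ef_eq_sum_lessThan:
  assumes "\<forall>i\<ge>K. dist_sphere V E v i = {}"
  shows "ef V E v = (\<Sum>i<K. (1/2) ^ i * real (card (dist_sphere V E v i)))"
  unfolding ef_def using assms by (intro suminf_finite) auto

lemma sum_lessThan_mult_half_power:
  "(\<Sum>i<K. real i * (1/2) ^ i) = 2 - 2 * (real K + 1) * (1/2) ^ K"
proof (induction K)
  case 0
  then show ?case by simp
next
  case (Suc K)
  have "(\<Sum>i<Suc K. real i * (1/2) ^ i) = 2 - 2 * (real K + 1) * (1/2) ^ K + real K * (1/2) ^ K"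
    using Suc.IH by simp
  also have "\<dots> = 2 - 2 * (real (Suc K) + 1) * (1/2) ^ Suc K"
    by (simp add: algebra_simps)
  finally show ?case .
qed

lemma ef_less_if_card_dist_sphere_linear:
  fixes c :: real
  assumes vanish: "\<forall>i\<ge>K. dist_sphere V E v i = {}"
    and linear: "\<And>i. i > 0 \<Longrightarrow> card (dist_sphere V E v i) \<le> c * i"
    and "c > 0"
  shows "ef V E v < 1 + 2 * c"
proof -
  have term_le: "(1/2) ^ i * real (card (dist_sphere V E v i))
      \<le> c * (real i * (1/2) ^ i) + (if i = 0 then 1 else 0)" for i
  proof (cases "i = 0")
    case True
    then show ?thesis using card_dist_sphere_0_le[of V E v] by simp
  next
    case False
    then have "(1/2) ^ i * real (card (dist_sphere V E v i)) \<le> (1/2) ^ i * (c * i)"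
      using linear by (intro mult_left_mono) auto
    with False show ?thesis by (simp add: algebra_simps)
  qed
  have "ef V E v \<le> (\<Sum>i<K. c * (real i * (1/2) ^ i) + (if i = 0 then 1 else 0))"
    unfolding ef_eq_sum_lessThan[OF vanish] by (intro sum_mono term_le)
  also have "\<dots> \<le> c * (2 - 2 * (real K + 1) * (1/2) ^ K) + 1"
    by (simp add: sum.distrib sum_distrib_left[symmetric] sum_lessThan_mult_half_power)
  also have "\<dots> < 1 + 2 * c"
    using \<open>c > 0\<close> by simp
  finally show ?thesis .
qed

lemma relpow_walk_along_line:
  fixes f :: "int \<Rightarrow> 'a"
  assumes "\<And>z. (f z, f (z + 1)) \<in> R" and "\<And>z. (f (z + 1), f z) \<in> R"
  shows "(f a, f (a + x)) \<in> R ^^ nat \<bar>x\<bar>"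
proof -
  have "(f a, f (a + int k)) \<in> R ^^ k \<and> (f a, f (a - int k)) \<in> R ^^ k" for k
  proof (induction k)
    case 0
    then show ?case by simp
  next
    case (Suc k)
    have "(f (a + int k), f (a + int (Suc k))) \<in> R" "(f (a - int k), f (a - int (Suc k))) \<in> R"
      using assms[of "a + int k"] assms[of "a - int (Suc k)"] by (simp_all add: algebra_simps)
    with Suc.IH show ?case by (blast intro: relpow_Suc_I)
  qed
  moreover have "x = int (nat \<bar>x\<bar>) \<or> x = - int (nat \<bar>x\<bar>)"
    by linarith
  ultimately show ?thesis
    by (metis diff_conv_add_uminus)
qed

definition l1_sphere :: "nat \<Rightarrow> (int \<times> int) set" where
  "l1_sphere i = {(x, y). nat \<bar>x\<bar> + nat \<bar>y\<bar> = i}"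

lemma finite_l1_sphere: "finite (l1_sphere i)"
  by (rule finite_subset[of _ "{- int i..int i} \<times> {- int i..int i}"]) (auto simp: l1_sphere_def)

lemma card_l1_sphere_le:
  assumes "i > 0"
  shows "card (l1_sphere i) \<le> 4 * i"
proof -
  define Q1 where "Q1 = (\<lambda>t. (int t, int i - int t)) ` {..<i}"
  define Q2 where "Q2 = (\<lambda>t. (int i - int t, - int t)) ` {..<i}"
  define Q3 where "Q3 = (\<lambda>t. (- int t, int t - int i)) ` {..<i}"
  define Q4 where "Q4 = (\<lambda>t. (int t - int i, int t)) ` {..<i}"
  have "l1_sphere i \<subseteq> Q1 \<union> Q2 \<union> Q3 \<union> Q4"
  proof
    fix p assume "p \<in> l1_sphere i"
    then obtain x y where p: "p = (x, y)" and xy: "nat \<bar>x\<bar> + nat \<bar>y\<bar> = i"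
      unfolding l1_sphere_def by blast
    consider "x \<ge> 0" "y > 0" | "x > 0" "y \<le> 0" | "x \<le> 0" "y < 0" | "x < 0" "y \<ge> 0"
      using xy assms by linarith
    then show "p \<in> Q1 \<union> Q2 \<union> Q3 \<union> Q4"
    proof cases
      case 1
      then have "p \<in> Q1" unfolding Q1_def p using xy by (intro image_eqI[where x = "nat x"]) auto
      then show ?thesis by blast
    next
      case 2
      then have "p \<in> Q2" unfolding Q2_def p using xy by (intro image_eqI[where x = "nat (- y)"]) auto
      then show ?thesis by blast
    next
      case 3
      then have "p \<in> Q3" unfolding Q3_def p using xy by (intro image_eqI[where x = "nat (- x)"]) auto
      then show ?thesis by blast
    next
      case 4
      then have "p \<in> Q4" unfolding Q4_def p using xy by (intro image_eqI[where x = "nat y"]) auto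
      then show ?thesis by blast
    qed
  qed
  then have "card (l1_sphere i) \<le> card (Q1 \<union> Q2 \<union> Q3 \<union> Q4)"
    by (intro card_mono) (simp_all add: Q1_def Q2_def Q3_def Q4_def)
  also have "\<dots> \<le> card Q1 + card Q2 + card Q3 + card Q4"
    by (meson card_Un_le add_right_mono order_trans)
  also have "\<dots> \<le> i + i + i + i"
    unfolding Q1_def Q2_def Q3_def Q4_def
    by (intro add_mono order_trans[OF card_image_le]) simp_all
  finally show ?thesis by simp
qed

definition cycle_vertex :: "nat \<Rightarrow> int \<Rightarrow> nat" where
  "cycle_vertex m z = nat (z mod int m)"

definition torus_vertex :: "nat \<Rightarrow> nat \<Rightarrow> int \<Rightarrow> int \<Rightarrow> nat \<times> nat" where
  "torus_vertex m n x y = (cycle_vertex m x, cycle_vertex n y)"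

lemma cycle_vertex_less: "m > 0 \<Longrightarrow> cycle_vertex m z < m"
  unfolding cycle_vertex_def by (simp add: nat_less_iff)

lemma cycle_vertex_of_nat: "cycle_vertex m (int k) = k mod m"
  unfolding cycle_vertex_def by (simp flip: zmod_int)

lemma cycle_vertex_eq_iff: "m > 0 \<Longrightarrow> cycle_vertex m z = cycle_vertex m w \<longleftrightarrow> z mod int m = w mod int m"
  unfolding cycle_vertex_def by (simp add: nat_eq_iff)

lemma cycle_vertex_succ:
  assumes "m > 0"
  shows "cycle_vertex m (z + 1) = (cycle_vertex m z + 1) mod m"
proof -
  have "int (cycle_vertex m z) = z mod int m"
    using assms unfolding cycle_vertex_def by simp
  then have "(z + 1) mod int m = int (cycle_vertex m z + 1) mod int m"
    by (metis mod_add_left_eq of_nat_Suc add.commute Suc_eq_plus1)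
  then have "cycle_vertex m (z + 1) = cycle_vertex m (int (cycle_vertex m z + 1))"
    using assms cycle_vertex_eq_iff by blast
  then show ?thesis
    by (simp only: cycle_vertex_of_nat)
qed

lemma cycle_adj_cycle_vertex_iff:
  assumes "m > 0"
  shows "cycle_adj m (cycle_vertex m z) c \<longleftrightarrow> c = cycle_vertex m (z + 1) \<or> c = cycle_vertex m (z - 1)"
proof -
  have pred: "cycle_vertex m z = (c + 1) mod m \<longleftrightarrow> c = cycle_vertex m (z - 1)" if "c < m"
  proof -
    have "cycle_vertex m z = (c + 1) mod m \<longleftrightarrow> z mod int m = int (c + 1) mod int m"
      using assms cycle_vertex_eq_iff[of m z "int (c + 1)"] by (simp only: cycle_vertex_of_nat)
    also have "\<dots> \<longleftrightarrow> (z - 1) mod int m = int c mod int m"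
    proof
      assume "z mod int m = int (c + 1) mod int m"
      then have "(z - 1) mod int m = (int (c + 1) - 1) mod int m"
        by (rule mod_diff_cong) simp
      then show "(z - 1) mod int m = int c mod int m" by simp
    next
      assume "(z - 1) mod int m = int c mod int m"
      then have "(z - 1 + 1) mod int m = (int c + 1) mod int m"
        by (rule mod_add_cong) simp
      then show "z mod int m = int (c + 1) mod int m" by (simp add: add.commute)
    qed
    also have "\<dots> \<longleftrightarrow> c = cycle_vertex m (z - 1)"
      using assms that cycle_vertex_eq_iff[of m "z - 1" "int c"] cycle_vertex_of_nat[of m c] by auto
    finally show ?thesis .
  qed
  have "cycle_vertex m z < m" "cycle_vertex m (z - 1) < m" "(cycle_vertex m z + 1) mod m < m"
    using assms by (simp_all add: cycle_vertex_less)
  then show ?thesis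
    unfolding cycle_adj_def cycle_vertex_succ[OF assms] using pred by blast
qed

lemma torus_edges_from_torus_vertex_iff:
  assumes "m > 0" and "n > 0"
  shows "(torus_vertex m n x y, u) \<in> torus_edges m n \<longleftrightarrow>
    u \<in> {torus_vertex m n (x + 1) y, torus_vertex m n (x - 1) y,
          torus_vertex m n x (y + 1), torus_vertex m n x (y - 1)}"
  using assms cycle_adj_cycle_vertex_iff cycle_vertex_less
  unfolding torus_edges_def torus_verts_def torus_vertex_def by auto

lemma relpow_torus_edges_torus_vertex:
  assumes "m > 0" and "n > 0"
  shows "(torus_vertex m n a b, torus_vertex m n (a + x) (b + y))
    \<in> torus_edges m n ^^ (nat \<bar>x\<bar> + nat \<bar>y\<bar>)"
proof -
  have "(torus_vertex m n a b, torus_vertex m n (a + x) b) \<in> torus_edges m n ^^ nat \<bar>x\<bar>"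
    by (rule relpow_walk_along_line[where f = "\<lambda>z. torus_vertex m n z b"])
      (simp_all add: torus_edges_from_torus_vertex_iff assms)
  moreover have "(torus_vertex m n (a + x) b, torus_vertex m n (a + x) (b + y))
      \<in> torus_edges m n ^^ nat \<bar>y\<bar>"
    by (rule relpow_walk_along_line[where f = "\<lambda>w. torus_vertex m n (a + x) w"])
      (simp_all add: torus_edges_from_torus_vertex_iff assms)
  ultimately show ?thesis
    by (auto simp: relpow_add)
qed

lemma torus_walk_endpoint:
  assumes "m > 0" and "n > 0" and "(torus_vertex m n a b, u) \<in> torus_edges m n ^^ k"
  shows "\<exists>x y. nat \<bar>x\<bar> + nat \<bar>y\<bar> \<le> k \<and> u = torus_vertex m n (a + x) (b + y)"
  using assms(3)
proof (induction k arbitrary: u)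
  case 0
  then show ?case by (intro exI[of _ 0]) auto
next
  case (Suc k)
  then obtain w where "(torus_vertex m n a b, w) \<in> torus_edges m n ^^ k" and w_u: "(w, u) \<in> torus_edges m n"
    by auto
  with Suc.IH obtain x y where xy: "nat \<bar>x\<bar> + nat \<bar>y\<bar> \<le> k" and w: "w = torus_vertex m n (a + x) (b + y)"
    by blast
  have "\<exists>(x', y') \<in> {(x + 1, y), (x - 1, y), (x, y + 1), (x, y - 1)}. u = torus_vertex m n (a + x') (b + y')"
    using w_u unfolding w torus_edges_from_torus_vertex_iff[OF assms(1,2)] by (auto simp: algebra_simps)
  then obtain x' y' where "(x', y') \<in> {(x + 1, y), (x - 1, y), (x, y + 1), (x, y - 1)}"
    and u: "u = torus_vertex m n (a + x') (b + y')"
    by blast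
  then have "nat \<bar>x'\<bar> + nat \<bar>y'\<bar> \<le> Suc k"
    using xy by auto
  with u show ?case by blast
qed

lemma torus_vertex_of_nat: "(a, b) \<in> torus_verts m n \<Longrightarrow> torus_vertex m n (int a) (int b) = (a, b)"
  unfolding torus_verts_def torus_vertex_def by (simp add: cycle_vertex_of_nat)

lemma torus_dist_sphere_eq_empty:
  assumes "v \<in> torus_verts m n" and "m + n \<le> i"
  shows "dist_sphere (torus_verts m n) (torus_edges m n) v i = {}"
proof (rule dist_sphere_eq_empty[OF _ assms(2)], intro ballI)
  fix u assume "u \<in> torus_verts m n"
  then obtain c d where u: "u = (c, d)" "c < m" "d < n"
    unfolding torus_verts_def by auto
  obtain a b where v: "v = (a, b)" "a < m" "b < n"
    using assms(1) unfolding torus_verts_def by auto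
  have "(torus_vertex m n (int a) (int b), torus_vertex m n (int a + (int c - int a)) (int b + (int d - int b)))
      \<in> torus_edges m n ^^ (nat \<bar>int c - int a\<bar> + nat \<bar>int d - int b\<bar>)"
    using u v by (intro relpow_torus_edges_torus_vertex) auto
  moreover have "torus_vertex m n (int a) (int b) = v" "torus_vertex m n (int c) (int d) = u"
    using u v assms(1) \<open>u \<in> torus_verts m n\<close> by (simp_all add: torus_vertex_of_nat)
  moreover have "nat \<bar>int c - int a\<bar> + nat \<bar>int d - int b\<bar> < m + n"
    using u v by linarith
  ultimately show "\<exists>j<m + n. (v, u) \<in> torus_edges m n ^^ j"
    by auto
qed

lemma torus_dist_sphere_subset:
  assumes "m > 0" and "n > 0"
  shows "dist_sphere (torus_verts m n) (torus_edges m n) (torus_vertex m n a b) i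
    \<subseteq> (\<lambda>(x, y). torus_vertex m n (a + x) (b + y)) ` l1_sphere i"
proof
  fix u assume u: "u \<in> dist_sphere (torus_verts m n) (torus_edges m n) (torus_vertex m n a b) i"
  then have "(torus_vertex m n a b, u) \<in> torus_edges m n ^^ i"
    unfolding dist_sphere_def by blast
  then obtain x y where "nat \<bar>x\<bar> + nat \<bar>y\<bar> \<le> i" and u_xy: "u = torus_vertex m n (a + x) (b + y)"
    using torus_walk_endpoint[OF assms] by blast
  moreover have "i \<le> nat \<bar>x\<bar> + nat \<bar>y\<bar>"
    using dist_sphere_le_walk_length[OF u] relpow_torus_edges_torus_vertex[OF assms] u_xy by blast
  ultimately show "u \<in> (\<lambda>(x, y). torus_vertex m n (a + x) (b + y)) ` l1_sphere i"
    unfolding l1_sphere_def by force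
qed

lemma card_torus_dist_sphere_le:
  assumes "v \<in> torus_verts m n" and "i > 0"
  shows "card (dist_sphere (torus_verts m n) (torus_edges m n) v i) \<le> 4 * i"
proof -
  obtain a b where v: "v = (a, b)"
    by fastforce
  have "m > 0" "n > 0"
    using assms(1) unfolding torus_verts_def by auto
  have "card (dist_sphere (torus_verts m n) (torus_edges m n) v i)
      \<le> card ((\<lambda>(x, y). torus_vertex m n (int a + x) (int b + y)) ` l1_sphere i)"
    using torus_dist_sphere_subset[OF \<open>m > 0\<close> \<open>n > 0\<close>] torus_vertex_of_nat assms(1) v
    by (metis card_mono finite_imageI finite_l1_sphere)
  also have "\<dots> \<le> card (l1_sphere i)"
    by (rule card_image_le[OF finite_l1_sphere])
  also have "\<dots> \<le> 4 * i"
    using card_l1_sphere_le[OF assms(2)] .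
  finally show ?thesis .
qed

theorem claim5p5:
  fixes m n :: nat and v :: "nat \<times> nat"
  assumes "m \<ge> 3" and "n \<ge> 3" and "v \<in> torus_verts m n"
  shows "ef (torus_verts m n) (torus_edges m n) v < 9"
proof -
  have "ef (torus_verts m n) (torus_edges m n) v < 1 + 2 * 4"
  proof (rule ef_less_if_card_dist_sphere_linear)
    show "\<forall>i\<ge>m + n. dist_sphere (torus_verts m n) (torus_edges m n) v i = {}"
      using torus_dist_sphere_eq_empty[OF assms(3)] by blast
    show "real (card (dist_sphere (torus_verts m n) (torus_edges m n) v i)) \<le> 4 * real i" if "i > 0" for i
      using card_torus_dist_sphere_le[OF assms(3) that] by linarith
  qed simp
  then show ?thesis by simp
qed

end
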